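(* Let $G$ be a compact, connected Lie group whose Lie algebra is simple, and let $(\pi,V)$ be an irreducible representation of $G$ on a finite-dimensional real vector space $V$. Fix $v\in V$ and let $f\colon G\to V$ be $f(x)=\pi(x)v$. Suppose $x_1,\ldots,x_n\in G$ are such that the convex hull of $f(x_1),\ldots,f(x_n)$ contains $0$ as an interior point. Then \[df_{x_1}T_{x_1}(G)+df_{x_2}T_{x_2}(G)+\cdots+df_{x_n}T_{x_n}(G)=V.\]
   Context: Here $df_x\colon T_x(G)\to V$ is the differential of $f$ at $x$. *)

theory Defs
  imports "HOL-Analysis.Analysis" "HOL-Library.Set_Algebras"
begin

text \<open>Compact Lie groups are realised as compact subgroups of GL(n,R)
  (closed, hence embedded Lie subgroups).\<close>

definition matrix_group :: "(real^'n^'n) set \<Rightarrow> bool" where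
  "matrix_group G \<longleftrightarrow> G \<subseteq> {A. invertible A} \<and> mat 1 \<in> G
     \<and> (\<forall>A\<in>G. \<forall>B\<in>G. A ** B \<in> G) \<and> (\<forall>A\<in>G. matrix_inv A \<in> G)"

definition tangent_space :: "(real^'n^'n) set \<Rightarrow> real^'n^'n \<Rightarrow> (real^'n^'n) set" where
  "tangent_space G x = {X. \<exists>\<gamma>. (\<forall>t. \<gamma> t \<in> G) \<and> \<gamma> 0 = x \<and> (\<gamma> has_vector_derivative X) (at 0)}"

definition lie_algebra :: "(real^'n^'n) set \<Rightarrow> (real^'n^'n) set" where
  "lie_algebra G = tangent_space G (mat 1)"

definition lie_bracket :: "real^'n^'n \<Rightarrow> real^'n^'n \<Rightarrow> real^'n^'n" where
  "lie_bracket X Y = X ** Y - Y ** X"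

definition lie_ideal :: "(real^'n^'n) set \<Rightarrow> (real^'n^'n) set \<Rightarrow> bool" where
  "lie_ideal L I \<longleftrightarrow> subspace I \<and> I \<subseteq> L \<and> (\<forall>X\<in>L. \<forall>Y\<in>I. lie_bracket X Y \<in> I)"

definition simple_lie_algebra :: "(real^'n^'n) set \<Rightarrow> bool" where
  "simple_lie_algebra L \<longleftrightarrow> (\<exists>X\<in>L. \<exists>Y\<in>L. lie_bracket X Y \<noteq> 0)
     \<and> (\<forall>I. lie_ideal L I \<longrightarrow> I = {0} \<or> I = L)"

definition representation :: "(real^'n^'n) set \<Rightarrow> (real^'n^'n \<Rightarrow> 'v::euclidean_space \<Rightarrow> 'v) \<Rightarrow> bool" where
  "representation G \<pi> \<longleftrightarrow> (\<forall>x\<in>G. linear (\<pi> x)) \<and> \<pi> (mat 1) = id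
     \<and> (\<forall>x\<in>G. \<forall>y\<in>G. \<pi> (x ** y) = \<pi> x \<circ> \<pi> y)
     \<and> (\<forall>v. continuous_on G (\<lambda>x. \<pi> x v))"

definition irreducible_rep :: "(real^'n^'n) set \<Rightarrow> (real^'n^'n \<Rightarrow> 'v::euclidean_space \<Rightarrow> 'v) \<Rightarrow> bool" where
  "irreducible_rep G \<pi> \<longleftrightarrow> representation G \<pi> \<and>
     (\<forall>W. subspace W \<and> (\<forall>x\<in>G. \<pi> x ` W \<subseteq> W) \<longrightarrow> W = {0} \<or> W = UNIV)"

text \<open>Image of the differential of f at x, df_x(T_x G), where f is a map G \<rightarrow> V:
  the velocities of f \<circ> \<gamma> for curves \<gamma> in G through x.\<close>
definition diff_image :: "(real^'n^'n) set \<Rightarrow> (real^'n^'n \<Rightarrow> 'v::real_normed_vector) \<Rightarrow> real^'n^'n \<Rightarrow> 'v set" where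
  "diff_image G f x = {w. \<exists>\<gamma> X. (\<forall>t. \<gamma> t \<in> G) \<and> \<gamma> 0 = x \<and> (\<gamma> has_vector_derivative X) (at 0)
        \<and> ((\<lambda>t. f (\<gamma> t)) has_vector_derivative w) (at 0)}"

end

theory Submission
  imports Defs
begin

text \<open>If the velocities \<open>df\<^sub>x\<^sub>i(T\<^sub>x\<^sub>i G)\<close> spanned a proper subspace, pick \<open>a \<noteq> 0\<close> orthogonal
  to all of them. For every one-parameter subgroup \<open>exp(tX)\<close> of \<open>G\<close>, the vector \<open>d\<pi>(X)\<^sup>* a\<close> is
  then orthogonal to every point \<open>f(x\<^sub>i) = \<pi>(x\<^sub>i) v\<close>, so it vanishes because these points surround
  \<open>0\<close>. Hence the functional \<open>a\<close> is invariant under every \<open>\<pi>(exp X)\<close>; since exponentials generate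
  the connected closed group \<open>G\<close> (von Neumann), \<open>a\<close> is \<open>G\<close>-invariant, its kernel is a
  \<open>G\<close>-invariant hyperplane, and irreducibility forces \<open>\<pi>\<close> to be trivial. Then all \<open>f(x\<^sub>i)\<close>
  equal \<open>v\<close>, whose convex hull has empty interior.\<close>

lemma orthogonal_zero_if_zero_interior_convex_hull:
  fixes S :: "'a::euclidean_space set"
  assumes "0 \<in> interior (convex hull S)" "\<And>y. y \<in> S \<Longrightarrow> c \<bullet> y = 0"
  shows "c = 0"
proof (rule ccontr)
  assume "c \<noteq> 0"
  have "convex hull S \<subseteq> {y. c \<bullet> y = 0}"
    using assms(2) by (intro hull_minimal convex_hyperplane) auto
  then have "interior (convex hull S) = {}"
    using interior_mono \<open>c \<noteq> 0\<close> by (metis interior_hyperplane subset_empty)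
  with assms(1) show False by simp
qed

lemma subspace_set_sum:
  assumes "finite I" "\<And>i. i \<in> I \<Longrightarrow> subspace (D i)"
  shows "subspace (\<Sum>i\<in>I. D i)"
  unfolding set_sum_alt[OF assms(1)] subspace_def
proof (intro conjI ballI allI)
  show "0 \<in> {sum s I |s. \<forall>i\<in>I. s i \<in> D i}"
    using assms(2) subspace_0 by (intro CollectI exI[of _ "\<lambda>_. 0"]) auto
next
  fix x y assume "x \<in> {sum s I |s. \<forall>i\<in>I. s i \<in> D i}" "y \<in> {sum s I |s. \<forall>i\<in>I. s i \<in> D i}"
  then obtain s t where "x = sum s I" "y = sum t I" "\<forall>i\<in>I. s i \<in> D i" "\<forall>i\<in>I. t i \<in> D i"
    by blast
  then show "x + y \<in> {sum s I |s. \<forall>i\<in>I. s i \<in> D i}"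
    by (intro CollectI exI[of _ "\<lambda>i. s i + t i"]) (auto simp: sum.distrib intro: subspace_add[OF assms(2)])
next
  fix c :: real and x assume "x \<in> {sum s I |s. \<forall>i\<in>I. s i \<in> D i}"
  then obtain s where "x = sum s I" "\<forall>i\<in>I. s i \<in> D i"
    by blast
  then show "c *\<^sub>R x \<in> {sum s I |s. \<forall>i\<in>I. s i \<in> D i}"
    by (intro CollectI exI[of _ "\<lambda>i. c *\<^sub>R s i"]) (auto simp: scaleR_sum_right intro: subspace_scale[OF assms(2)])
qed

lemma subset_set_sum:
  assumes "finite I" "j \<in> I" "\<And>i. i \<in> I \<Longrightarrow> 0 \<in> D i"
  shows "D j \<subseteq> (\<Sum>i\<in>I. D i)"
proof
  fix w assume "w \<in> D j"
  then show "w \<in> (\<Sum>i\<in>I. D i)"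
    unfolding set_sum_alt[OF assms(1)] using assms
    by (intro CollectI exI[of _ "\<lambda>i. if i = j then w else 0"]) (auto simp: sum.delta)
qed

lemma proper_subspace_orthogonal_exists:
  fixes W :: "'a::euclidean_space set"
  assumes "subspace W" "W \<noteq> UNIV"
  obtains a where "a \<noteq> 0" "\<And>y. y \<in> W \<Longrightarrow> a \<bullet> y = 0"
proof -
  have "span W \<subset> span UNIV"
    using assms by (simp add: span_eq_iff[THEN iffD2] psubset_eq)
  then show thesis
  proof (rule orthogonal_to_subspace_exists_gen)
    fix a assume a: "a \<noteq> 0" "\<And>y. y \<in> span W \<Longrightarrow> orthogonal a y"
    show thesis
      using a(2)[OF span_base] by (intro that[OF a(1)]) (simp add: orthogonal_def)
  qed
qed

lemma span_Int_span_diff: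
  fixes C :: "'a::real_vector set"
  assumes C: "independent C" "finite C" and "B \<subseteq> C"
    and z: "z \<in> span B" "z \<in> span (C - B)"
  shows "z = 0"
proof -
  have "finite B" "finite (C - B)" using assms finite_subset by auto
  obtain u where u: "z = (\<Sum>v\<in>B. u v *\<^sub>R v)"
    using z(1) span_finite[OF \<open>finite B\<close>] by auto
  obtain w where w: "z = (\<Sum>v\<in>C - B. w v *\<^sub>R v)"
    using z(2) span_finite[OF \<open>finite (C - B)\<close>] by auto
  define f where "f v = (if v \<in> B then u v else - w v)" for v
  have "(\<Sum>v\<in>C. f v *\<^sub>R v) = (\<Sum>v\<in>B. f v *\<^sub>R v) + (\<Sum>v\<in>C - B. f v *\<^sub>R v)"
    using \<open>B \<subseteq> C\<close> C(2) by (metis sum.subset_diff add.commute)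
  also have "\<dots> = 0"
    using u w by (simp add: f_def sum_negf)
  finally have "\<forall>v\<in>C. f v = 0"
    using C dependent_finite by blast
  then have "\<forall>v\<in>B. u v = 0"
    using \<open>B \<subseteq> C\<close> unfolding f_def by (smt (verit) subsetD)
  then show ?thesis using u by simp
qed

lemma independent_complement_coordinates:
  fixes B :: "'a::euclidean_space set"
  assumes "independent B"
  obtains bs c Q where "set bs = B" "\<And>b. linear (c b)" "linear Q"
    "\<And>X. (\<Sum>b\<leftarrow>bs. c b X *\<^sub>R b) + Q X = X" "range Q \<inter> span B \<subseteq> {0}"
proof -
  obtain C where C: "B \<subseteq> C" "independent C" "UNIV \<subseteq> span C"
    by (rule maximal_independent_subset_extend[OF subset_UNIV assms])
  have "finite C" using C(2) finiteI_independent by blast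
  obtain bs where bs: "set bs = B" "distinct bs"
    using finite_distinct_list finite_subset[OF C(1) \<open>finite C\<close>] by blast
  define c where "c b X = real_vector.representation C X b" for b X
  define Q where "Q X = (\<Sum>m\<in>C - B. c m X *\<^sub>R m)" for X
  have span_C: "X \<in> span C" for X using C(3) by blast
  have lin_c: "linear (c b)" for b
    by (rule linearI) (simp_all add: c_def representation_add[OF C(2) span_C span_C]
        representation_scale[OF C(2) span_C])
  have "linear Q"
    by (rule linearI) (simp_all add: Q_def linear_add[OF lin_c] linear_scale[OF lin_c]
        scaleR_add_left sum.distrib scaleR_sum_right)
  moreover have "(\<Sum>b\<leftarrow>bs. c b X *\<^sub>R b) + Q X = X" for X
  proof -
    have "(\<Sum>b\<leftarrow>bs. c b X *\<^sub>R b) + Q X = (\<Sum>b\<in>C. c b X *\<^sub>R b)"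
      using bs C(1) \<open>finite C\<close>
      by (simp add: sum_list_distinct_conv_sum_set Q_def sum.subset_diff[of B C])
    also have "\<dots> = X"
      unfolding c_def by (rule sum_representation_eq[OF C(2) span_C \<open>finite C\<close> order_refl])
    finally show ?thesis .
  qed
  moreover have "range Q \<inter> span B \<subseteq> {0}"
  proof
    fix z assume "z \<in> range Q \<inter> span B"
    moreover have "Q X \<in> span (C - B)" for X
      unfolding Q_def by (intro span_sum span_scale span_base) auto
    ultimately show "z \<in> {0}"
      using span_Int_span_diff[OF C(2) \<open>finite C\<close> C(1)] by blast
  qed
  ultimately show thesis
    using that bs(1) lin_c by blast
qed

section \<open>The Banach algebra of operators on a Euclidean space\<close>

text \<open>The library equips \<open>real^'n^'n\<close> with the componentwise product, so the exponential
  series of matrices is taken in this type of operators instead.\<close>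
typedef (overloaded) 'a endo = "UNIV :: ('a::euclidean_space \<Rightarrow>\<^sub>L 'a) set"
  by simp

setup_lifting type_definition_endo

instantiation endo :: (euclidean_space) real_normed_algebra_1
begin

lift_definition zero_endo :: "'a endo" is 0 .
lift_definition one_endo :: "'a endo" is id_blinfun .
lift_definition plus_endo :: "'a endo \<Rightarrow> 'a endo \<Rightarrow> 'a endo" is "(+)" .
lift_definition minus_endo :: "'a endo \<Rightarrow> 'a endo \<Rightarrow> 'a endo" is "(-)" .
lift_definition uminus_endo :: "'a endo \<Rightarrow> 'a endo" is uminus .
lift_definition times_endo :: "'a endo \<Rightarrow> 'a endo \<Rightarrow> 'a endo" is "(o\<^sub>L)" .
lift_definition scaleR_endo :: "real \<Rightarrow> 'a endo \<Rightarrow> 'a endo" is scaleR .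
lift_definition norm_endo :: "'a endo \<Rightarrow> real" is norm .
lift_definition sgn_endo :: "'a endo \<Rightarrow> 'a endo" is "\<lambda>f. f /\<^sub>R norm f" .
lift_definition dist_endo :: "'a endo \<Rightarrow> 'a endo \<Rightarrow> real" is "\<lambda>f g. norm (f - g)" .

definition uniformity_endo :: "('a endo \<times> 'a endo) filter" where
  "uniformity_endo = (INF e\<in>{0<..}. principal {(x, y). norm (Rep_endo x - Rep_endo y) < e})"

definition open_endo :: "'a endo set \<Rightarrow> bool" where
  "open_endo U = (\<forall>x\<in>U. eventually (\<lambda>(x', y). x' = x \<longrightarrow> y \<in> U)
     (INF e\<in>{0<..}. principal {(x, y). norm (Rep_endo x - Rep_endo y) < e}))"

instance
proof
  fix a b c :: "'a endo" and r s :: real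
  show "a + b + c = a + (b + c)" by transfer (simp add: algebra_simps)
  show "a + b = b + a" by transfer (simp add: algebra_simps)
  show "0 + a = a" by transfer simp
  show "- a + a = 0" by transfer simp
  show "a - b = a + - b" by transfer simp
  show "r *\<^sub>R (a + b) = r *\<^sub>R a + r *\<^sub>R b" by transfer (simp add: algebra_simps)
  show "(r + s) *\<^sub>R a = r *\<^sub>R a + s *\<^sub>R a" by transfer (simp add: algebra_simps)
  show "r *\<^sub>R s *\<^sub>R a = (r * s) *\<^sub>R a" by transfer simp
  show "1 *\<^sub>R a = a" by transfer simp
  show "a * b * c = a * (b * c)" by transfer (auto intro!: blinfun_eqI)
  show "1 * a = a" by transfer (auto intro!: blinfun_eqI)
  show "a * 1 = a" by transfer (auto intro!: blinfun_eqI)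
  show "(a + b) * c = a * c + b * c"
    by transfer (auto intro!: blinfun_eqI simp: blinfun.bilinear_simps)
  show "a * (b + c) = a * b + a * c"
    by transfer (auto intro!: blinfun_eqI simp: blinfun.bilinear_simps)
  show "(0::'a endo) \<noteq> 1"
    by transfer (metis norm_blinfun_id norm_zero zero_neq_one)
  show "r *\<^sub>R a * b = r *\<^sub>R (a * b)"
    by transfer (auto intro!: blinfun_eqI simp: blinfun.bilinear_simps)
  show "a * r *\<^sub>R b = r *\<^sub>R (a * b)"
    by transfer (auto intro!: blinfun_eqI simp: blinfun.bilinear_simps)
  show "norm (a * b) \<le> norm a * norm b" by transfer (rule norm_blinfun_compose)
  show "norm (1::'a endo) = 1" by transfer simp
  show "(norm a = 0) = (a = 0)" by transfer simp
  show "norm (a + b) \<le> norm a + norm b" by transfer (rule norm_triangle_ineq)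
  show "norm (r *\<^sub>R a) = \<bar>r\<bar> * norm a" by transfer simp
  show "sgn a = inverse (norm a) *\<^sub>R a" by transfer (simp add: divide_inverse_commute)
  show "dist a b = norm (a - b)" by transfer simp
  have dist_Rep: "dist x y = norm (Rep_endo x - Rep_endo y)" for x y :: "'a endo"
    by transfer simp
  show "(uniformity :: ('a endo \<times> 'a endo) filter) = (INF e\<in>{0<..}. principal {(x, y). dist x y < e})"
    by (simp add: uniformity_endo_def dist_Rep)
  show "open U = (\<forall>x\<in>U. eventually (\<lambda>(x', y). x' = x \<longrightarrow> y \<in> U) uniformity)" for U :: "'a endo set"
    by (simp add: open_endo_def uniformity_endo_def)
qed

end

instance endo :: (euclidean_space) banach
proof
  fix X :: "nat \<Rightarrow> 'a endo"
  assume "Cauchy X"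
  then have "Cauchy (\<lambda>n. Rep_endo (X n))"
    unfolding Cauchy_def dist_norm by (simp add: minus_endo.rep_eq[symmetric] norm_endo.rep_eq[symmetric])
  then obtain L where L: "(\<lambda>n. Rep_endo (X n)) \<longlonglongrightarrow> L"
    using Cauchy_convergent convergent_def by blast
  have "X \<longlonglongrightarrow> Abs_endo L"
  proof (rule LIMSEQ_I)
    fix r :: real assume "r > 0"
    from LIMSEQ_D[OF L this] obtain N where "\<forall>n\<ge>N. norm (Rep_endo (X n) - L) < r" by blast
    then show "\<exists>N. \<forall>n\<ge>N. norm (X n - Abs_endo L) < r"
      by (auto simp: norm_endo.rep_eq minus_endo.rep_eq Abs_endo_inverse)
  qed
  then show "convergent X" by (auto simp: convergent_def)
qed

lemma norm_exp_minus_one_minus_le: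
  fixes x :: "'a::{real_normed_algebra_1,banach}"
  assumes "norm x \<le> 1"
  shows "norm (exp x - 1 - x) \<le> (norm x)\<^sup>2"
proof -
  let ?f = "\<lambda>n. inverse (fact (n + 2)) *\<^sub>R (x ^ (n + 2))"
  let ?g = "\<lambda>n. inverse (fact (n + 2)) * (norm x ^ (n + 2))"
  have f_sum: "exp x - 1 - x = suminf ?f" using exp_first_two_terms[of x] by simp
  have g_sum: "exp (norm x) - 1 - norm x = suminf ?g" using exp_first_two_terms[of "norm x"] by simp
  have g_summable: "summable ?g"
    using summable_ignore_initial_segment[OF summable_norm_exp[of "norm x"], of 2]
    by (simp add: field_simps)
  have f_le_g: "norm (?f n) \<le> ?g n" for n
    using mult_left_mono[OF norm_power_ineq[of x "n + 2"], of "inverse (fact (n + 2))"] by simp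
  have f_summable: "summable (\<lambda>n. norm (?f n))"
    by (rule summable_comparison_test[OF _ g_summable]) (use f_le_g in auto)
  have "norm (suminf ?f) \<le> suminf (\<lambda>n. norm (?f n))" by (rule summable_norm[OF f_summable])
  also have "\<dots> \<le> suminf ?g" by (rule suminf_le[OF f_le_g f_summable g_summable])
  also have "\<dots> \<le> (norm x)\<^sup>2" using exp_bound[of "norm x"] assms g_sum by simp
  finally show ?thesis using f_sum by simp
qed

lemma exp_has_derivative_id_at_0:
  "((exp :: 'a::{real_normed_algebra_1,banach} \<Rightarrow> 'a) has_derivative id) (at 0)"
  unfolding has_derivative_at
proof (intro conjI)
  show "bounded_linear (id :: 'a \<Rightarrow> 'a)" by (simp add: id_def)
  have "\<forall>\<^sub>F h in at (0::'a). norm h < 1"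
    using eventually_at_in_open'[of "ball 0 1" 0] by (rule eventually_mono) simp_all
  then have "\<forall>\<^sub>F h in at (0::'a). norm (norm (exp (0 + h) - exp 0 - id h) / norm h) \<le> norm h"
  proof eventually_elim
    case (elim h)
    then have "norm (exp h - 1 - h) \<le> (norm h)\<^sup>2" by (intro norm_exp_minus_one_minus_le) simp
    then show ?case by (cases "h = 0") (simp_all add: divide_le_eq power2_eq_square)
  qed
  then show "(\<lambda>h::'a. norm (exp (0 + h) - exp 0 - id h) / norm h) \<midarrow>0\<rightarrow> 0"
    by (rule Lim_null_comparison) (rule tendsto_norm_zero[OF tendsto_ident_at])
qed

lemma norm_power_add_minus_power_le:
  fixes a h :: "'a::real_normed_algebra_1"
  shows "norm ((a + h) ^ n - a ^ n) \<le> (norm a + norm h) ^ n - norm a ^ n"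
proof (induction n)
  case 0
  then show ?case by simp
next
  case (Suc n)
  have "(a + h) ^ Suc n - a ^ Suc n = (a + h) * ((a + h) ^ n - a ^ n) + h * a ^ n"
    by (simp add: algebra_simps)
  then have "norm ((a + h) ^ Suc n - a ^ Suc n)
      \<le> norm (a + h) * norm ((a + h) ^ n - a ^ n) + norm h * norm (a ^ n)"
    by (metis norm_mult_ineq norm_triangle_le add_mono)
  also have "\<dots> \<le> (norm a + norm h) * ((norm a + norm h) ^ n - norm a ^ n) + norm h * norm a ^ n"
    by (intro add_mono mult_mono norm_triangle_ineq Suc.IH mult_left_mono norm_power_ineq) simp_all
  also have "\<dots> = (norm a + norm h) ^ Suc n - norm a ^ Suc n" by (simp add: algebra_simps)
  finally show ?case .
qed

lemma norm_exp_add_minus_exp_le: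
  fixes a h :: "'a::{real_normed_algebra_1,banach}"
  shows "norm (exp (a + h) - exp a) \<le> exp (norm a + norm h) - exp (norm a)"
proof -
  let ?f = "\<lambda>n. ((a + h) ^ n - a ^ n) /\<^sub>R fact n"
  let ?g = "\<lambda>n. ((norm a + norm h) ^ n - norm a ^ n) / fact n"
  have f_sums: "?f sums (exp (a + h) - exp a)"
    using sums_diff[OF exp_converges[of "a + h"] exp_converges[of a]] by (simp add: scaleR_diff_right)
  have g_sums: "?g sums (exp (norm a + norm h) - exp (norm a))"
    using sums_diff[OF exp_converges[of "norm a + norm h"] exp_converges[of "norm a"]] by (simp add: divide_inverse algebra_simps)
  have f_le_g: "norm (?f n) \<le> ?g n" for n
    using norm_power_add_minus_power_le[of a h n] by (simp add: divide_inverse mult.commute mult_left_mono)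
  have f_summable: "summable (\<lambda>n. norm (?f n))"
    by (rule summable_comparison_test[OF _ sums_summable[OF g_sums]]) (use f_le_g in auto)
  have "norm (exp (a + h) - exp a) \<le> suminf (\<lambda>n. norm (?f n))"
    using summable_norm[OF f_summable] f_sums sums_unique by metis
  also have "\<dots> \<le> suminf ?g" by (rule suminf_le[OF f_le_g f_summable sums_summable[OF g_sums]])
  finally show ?thesis using g_sums sums_unique by metis
qed

lemma isCont_exp_algebra: "isCont (exp :: 'a::{real_normed_algebra_1,banach} \<Rightarrow> 'a) a"
proof -
  have "((\<lambda>h::'a. exp (norm a + norm h) - exp (norm a)) \<longlongrightarrow> exp (norm a + norm (0::'a)) - exp (norm a)) (at 0)"
    by (intro tendsto_intros)
  then have "((\<lambda>h::'a. exp (norm a + norm h) - exp (norm a)) \<longlongrightarrow> 0) (at 0)"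
    by simp
  then have "((\<lambda>h. exp (a + h) - exp a) \<longlongrightarrow> 0) (at 0)"
    by (rule Lim_null_comparison[rotated]) (intro always_eventually allI norm_exp_add_minus_exp_le)
  then show ?thesis
    by (simp add: isCont_def LIM_offset_zero_iff LIM_zero_iff)
qed

lemma continuous_on_exp_algebra:
  "continuous_on S (f :: 'b::topological_space \<Rightarrow> 'a::{real_normed_algebra_1,banach})
    \<Longrightarrow> continuous_on S (\<lambda>x. exp (f x))"
  by (rule continuous_on_compose2[OF continuous_at_imp_continuous_on[OF ballI[OF isCont_exp_algebra]]]) auto

lemma has_derivative_exp_linear_at_0:
  fixes f :: "'x::real_normed_vector \<Rightarrow> 'a::{real_normed_algebra_1,banach}"
  assumes "bounded_linear f"
  shows "((\<lambda>X. exp (f X)) has_derivative f) (at 0)"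
proof -
  have "(exp has_derivative id) (at (f 0))"
    using exp_has_derivative_id_at_0 by (simp add: linear_simps(3)[OF assms])
  from diff_chain_at[OF bounded_linear_imp_has_derivative[OF assms] this] show ?thesis
    by (simp add: o_def)
qed

lemma has_derivative_foldr_exp_at_0:
  fixes fs :: "('x::real_normed_vector \<Rightarrow> 'a::{real_normed_algebra_1,banach}) list"
  assumes "\<forall>f\<in>set fs. bounded_linear f"
  shows "((\<lambda>X. foldr (\<lambda>f M. exp (f X) * M) fs 1) has_derivative (\<lambda>X. \<Sum>f\<leftarrow>fs. f X)) (at 0)"
  using assms
proof (induction fs)
  case Nil
  then show ?case by simp
next
  case (Cons f fs)
  then have f: "bounded_linear f" and f0: "f 0 = 0" by (simp_all add: linear_simps(3))
  have "foldr (\<lambda>f M. exp (f X) * M) fs 1 = 1" if "X = 0" for X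
    using Cons.prems that by (induction fs) (auto simp: linear_simps(3))
  then show ?case
    using has_derivative_mult[OF has_derivative_exp_linear_at_0[OF f] Cons.IH] Cons.prems f0
    by (simp add: algebra_simps)
qed

lemma continuous_on_foldr_exp:
  fixes fs :: "('x::topological_space \<Rightarrow> 'a::{real_normed_algebra_1,banach}) list"
  assumes "\<forall>f\<in>set fs. continuous_on S f"
  shows "continuous_on S (\<lambda>X. foldr (\<lambda>f M. exp (f X) * M) fs 1)"
  using assms by (induction fs) (auto intro!: continuous_on_mult continuous_on_exp_algebra)

section \<open>The matrix exponential\<close>

definition endo_of_matrix :: "real^'n^'n \<Rightarrow> (real^'n) endo" where
  "endo_of_matrix A = Abs_endo (Blinfun ((*v) A))"

definition matrix_of_endo :: "(real^'n) endo \<Rightarrow> real^'n^'n" where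
  "matrix_of_endo E = matrix (blinfun_apply (Rep_endo E))"

lemma blinfun_apply_endo_of_matrix: "blinfun_apply (Rep_endo (endo_of_matrix A)) = (*v) A"
  by (simp add: endo_of_matrix_def Abs_endo_inverse bounded_linear_Blinfun_apply)

lemma matrix_of_endo_of_matrix [simp]: "matrix_of_endo (endo_of_matrix A) = A"
  by (simp add: matrix_of_endo_def blinfun_apply_endo_of_matrix)

lemma endo_of_matrix_of_endo [simp]: "endo_of_matrix (matrix_of_endo E) = E"
proof -
  have "linear (blinfun_apply (Rep_endo E))"
    by (simp add: bounded_linear.linear blinfun.bounded_linear_right)
  then have "(*v) (matrix_of_endo E) = blinfun_apply (Rep_endo E)"
    by (simp add: matrix_of_endo_def matrix_works fun_eq_iff)
  then show ?thesis
    by (simp add: endo_of_matrix_def blinfun_apply_inverse Rep_endo_inverse)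
qed

lemma endo_of_matrix_mult: "endo_of_matrix (A ** B) = endo_of_matrix A * endo_of_matrix B"
  by (rule Rep_endo_inject[THEN iffD1])
    (auto intro!: blinfun_eqI simp: times_endo.rep_eq blinfun_apply_endo_of_matrix matrix_vector_mul_assoc)

lemma endo_of_matrix_one: "endo_of_matrix (mat 1) = 1"
  by (rule Rep_endo_inject[THEN iffD1])
    (auto intro!: blinfun_eqI simp: one_endo.rep_eq blinfun_apply_endo_of_matrix)

lemma matrix_of_endo_one [simp]: "matrix_of_endo 1 = mat 1"
  by (metis endo_of_matrix_one matrix_of_endo_of_matrix)

lemma linear_endo_of_matrix: "linear endo_of_matrix"
proof
  show "endo_of_matrix (A + B) = endo_of_matrix A + endo_of_matrix B" for A B :: "real^'n^'n"
    by (rule Rep_endo_inject[THEN iffD1])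
      (auto intro!: blinfun_eqI simp: plus_endo.rep_eq blinfun_apply_endo_of_matrix
        blinfun.bilinear_simps matrix_vector_mult_add_rdistrib)
  show "endo_of_matrix (c *\<^sub>R A) = c *\<^sub>R endo_of_matrix A" for c and A :: "real^'n^'n"
    by (rule Rep_endo_inject[THEN iffD1])
      (auto intro!: blinfun_eqI simp: scaleR_endo.rep_eq blinfun_apply_endo_of_matrix
        scaleR_matrix_vector_assoc scaleR_blinfun.rep_eq)
qed

lemma bounded_linear_endo_of_matrix: "bounded_linear endo_of_matrix"
  using linear_endo_of_matrix linear_conv_bounded_linear by blast

lemma matrix_of_endo_mult: "matrix_of_endo (E * F) = matrix_of_endo E ** matrix_of_endo F"
  by (metis endo_of_matrix_mult endo_of_matrix_of_endo matrix_of_endo_of_matrix)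

lemma bounded_linear_matrix_of_endo: "bounded_linear (matrix_of_endo :: (real^'n) endo \<Rightarrow> _)"
proof (rule bounded_linear_intro[where K = "real (CARD('n) * CARD('n))"])
  show "matrix_of_endo (E + F) = matrix_of_endo E + matrix_of_endo F" for E F :: "(real^'n) endo"
    using linear_add[OF linear_endo_of_matrix, of "matrix_of_endo E" "matrix_of_endo F"]
    by (metis matrix_of_endo_of_matrix endo_of_matrix_of_endo)
  show "matrix_of_endo (r *\<^sub>R E) = r *\<^sub>R matrix_of_endo E" for r and E :: "(real^'n) endo"
    using linear_scale[OF linear_endo_of_matrix, of r "matrix_of_endo E"]
    by (metis matrix_of_endo_of_matrix endo_of_matrix_of_endo)
  fix E :: "(real^'n) endo"
  have onorm: "onorm ((*v) (matrix_of_endo E)) = norm E"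
    by (metis blinfun_apply_endo_of_matrix norm_blinfun.rep_eq norm_endo.rep_eq endo_of_matrix_of_endo)
  have "norm (matrix_of_endo E) \<le> (\<Sum>i\<in>UNIV. norm (matrix_of_endo E $ i))"
    by (simp add: norm_vec_def L2_set_le_sum)
  also have "\<dots> \<le> (\<Sum>i\<in>(UNIV::'n set). \<Sum>j\<in>(UNIV::'n set). \<bar>matrix_of_endo E $ i $ j\<bar>)"
    by (intro sum_mono norm_le_l1_cart)
  also have "\<dots> \<le> (\<Sum>i\<in>(UNIV::'n set). \<Sum>j\<in>(UNIV::'n set). norm E)"
    by (intro sum_mono) (metis onorm matrix_component_le_onorm)
  finally show "norm (matrix_of_endo E) \<le> norm E * real (CARD('n) * CARD('n))"
    by (simp add: mult_ac)
qed

lemma bounded_bilinear_matrix_mult: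
  "bounded_bilinear ((**) :: real^'n^'m \<Rightarrow> real^'p^'n \<Rightarrow> real^'p^'m)"
  unfolding bilinear_conv_bounded_bilinear[symmetric] bilinear_def
  by (auto intro!: linearI simp: matrix_add_ldistrib matrix_scalar_ac scalar_matrix_assoc[symmetric])
    (simp add: matrix_matrix_mult_def vec_eq_iff sum.distrib algebra_simps)

definition mexp :: "real^'n^'n \<Rightarrow> real^'n^'n" where
  "mexp A = matrix_of_endo (exp (endo_of_matrix A))"

lemma mexp_zero [simp]: "mexp 0 = mat 1"
  by (simp add: mexp_def linear_0[OF linear_endo_of_matrix])

lemma mexp_add_scaleR: "mexp ((s + t) *\<^sub>R A) = mexp (s *\<^sub>R A) ** mexp (t *\<^sub>R A)"
proof -
  have "exp ((s + t) *\<^sub>R endo_of_matrix A) = exp (s *\<^sub>R endo_of_matrix A) * exp (t *\<^sub>R endo_of_matrix A)"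
    by (simp add: scaleR_add_left exp_add_commuting)
  then show ?thesis
    by (simp add: mexp_def matrix_of_endo_mult linear_scale[OF linear_endo_of_matrix])
qed

lemma mexp_uminus_mult: "mexp (- A) ** mexp A = mat 1"
  using mexp_add_scaleR[of "-1" 1 A] by simp

lemma continuous_on_mexp: "continuous_on S mexp"
  unfolding mexp_def[abs_def]
  by (intro continuous_on_compose2[OF linear_continuous_on[OF bounded_linear_matrix_of_endo]]
      continuous_on_exp_algebra linear_continuous_on bounded_linear_endo_of_matrix) auto

lemma mexp_scaleR_has_vector_derivative_0: "((\<lambda>t. mexp (t *\<^sub>R A)) has_vector_derivative A) (at 0)"
proof -
  have "((\<lambda>t. exp (t *\<^sub>R endo_of_matrix A)) has_vector_derivative endo_of_matrix A) (at 0)"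
    using exp_scaleR_has_vector_derivative_right[of "endo_of_matrix A" 0] by simp
  from bounded_linear.has_vector_derivative[OF bounded_linear_matrix_of_endo this] show ?thesis
    by (simp add: mexp_def linear_scale[OF linear_endo_of_matrix])
qed

definition mexp_prod :: "(real^'n^'n) list \<Rightarrow> real^'n^'n" where
  "mexp_prod Ys = foldr (\<lambda>Y M. mexp Y ** M) Ys (mat 1)"

lemma mexp_prod_simps [simp]:
  "mexp_prod [] = mat 1" "mexp_prod (Y # Ys) = mexp Y ** mexp_prod Ys"
  by (simp_all add: mexp_prod_def)

lemma mexp_prod_append: "mexp_prod (Xs @ Ys) = mexp_prod Xs ** mexp_prod Ys"
  by (induction Xs) (simp_all add: matrix_mul_assoc)

lemma mexp_prod_eq_foldr_exp:
  "mexp_prod (map (\<lambda>g. g X) gs) = matrix_of_endo (foldr (\<lambda>f M. exp (f X) * M) (map ((\<circ>) endo_of_matrix) gs) 1)"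
  by (induction gs) (simp_all add: mexp_def matrix_of_endo_mult)

lemma has_derivative_mexp_prod_at_0:
  fixes gs :: "('x::real_normed_vector \<Rightarrow> real^'n^'n) list"
  assumes "\<forall>g\<in>set gs. bounded_linear g"
  shows "((\<lambda>X. mexp_prod (map (\<lambda>g. g X) gs)) has_derivative (\<lambda>X. \<Sum>g\<leftarrow>gs. g X)) (at 0)"
proof -
  have "\<forall>f\<in>set (map ((\<circ>) endo_of_matrix) gs). bounded_linear f"
    using assms bounded_linear_compose[OF bounded_linear_endo_of_matrix] by (auto simp: o_def)
  from bounded_linear.has_derivative[OF bounded_linear_matrix_of_endo has_derivative_foldr_exp_at_0[OF this]]
  have "((\<lambda>X. mexp_prod (map (\<lambda>g. g X) gs))
      has_derivative (\<lambda>X. matrix_of_endo (\<Sum>f\<leftarrow>map ((\<circ>) endo_of_matrix) gs. f X))) (at 0)"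
    by (simp only: mexp_prod_eq_foldr_exp)
  moreover have "matrix_of_endo (\<Sum>f\<leftarrow>map ((\<circ>) endo_of_matrix) gs. f X) = (\<Sum>g\<leftarrow>gs. g X)" for X
    by (induction gs) (simp_all add: linear_simps(1)[OF bounded_linear_matrix_of_endo] linear_simps(3)[OF bounded_linear_matrix_of_endo])
  ultimately show ?thesis by simp
qed

lemma continuous_on_mexp_prod:
  assumes "\<forall>g\<in>set gs. continuous_on S g"
  shows "continuous_on S (\<lambda>X. mexp_prod (map (\<lambda>g. g X) gs))"
proof -
  have "\<forall>f\<in>set (map ((\<circ>) endo_of_matrix) gs). continuous_on S f"
    using assms continuous_on_compose[OF _ linear_continuous_on[OF bounded_linear_endo_of_matrix]]
    by auto
  from continuous_on_compose2[OF linear_continuous_on[OF bounded_linear_matrix_of_endo]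
      continuous_on_foldr_exp[OF this] subset_UNIV]
  show ?thesis by (simp only: mexp_prod_eq_foldr_exp)
qed

section \<open>Closed matrix groups are generated by exponentials\<close>

lemma matrix_inv_mult_self:
  fixes A :: "real^'n^'n"
  assumes "invertible A"
  shows "A ** matrix_inv A = mat 1" "matrix_inv A ** A = mat 1"
  using someI_ex[OF assms[unfolded invertible_def]] unfolding matrix_inv_def by auto

lemma matrix_inv_cancel_left:
  fixes A B :: "real^'n^'n"
  assumes "invertible A"
  shows "A ** (matrix_inv A ** B) = B"
  using matrix_inv_mult_self(1)[OF assms] by (simp add: matrix_mul_assoc)

lemma matrix_inv_unique_left:
  fixes A B :: "real^'n^'n"
  assumes "B ** A = mat 1"
  shows "matrix_inv A = B"
proof -
  have "invertible A" using assms invertible_left_inverse by blast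
  then have "matrix_inv A = (B ** A) ** matrix_inv A"
    using assms by simp
  also have "\<dots> = B"
    by (metis \<open>invertible A\<close> matrix_inv_mult_self(1) matrix_mul_assoc matrix_mul_rid)
  finally show ?thesis .
qed

lemma matrix_inv_mexp: "matrix_inv (mexp A) = mexp (- A)"
  by (rule matrix_inv_unique_left) (rule mexp_uminus_mult)

lemma
  assumes "matrix_group G"
  shows matrix_group_one: "mat 1 \<in> G"
    and matrix_group_mult: "A \<in> G \<Longrightarrow> B \<in> G \<Longrightarrow> A ** B \<in> G"
    and matrix_group_matrix_inv: "A \<in> G \<Longrightarrow> matrix_inv A \<in> G"
    and matrix_group_invertible: "A \<in> G \<Longrightarrow> invertible A"
  using assms by (auto simp: matrix_group_def)

definition exp_lie_algebra :: "(real^'n^'n) set \<Rightarrow> (real^'n^'n) set" where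
  "exp_lie_algebra G = {X. \<forall>t. mexp (t *\<^sub>R X) \<in> G}"

lemma exp_lie_algebra_scaleR: "X \<in> exp_lie_algebra G \<Longrightarrow> c *\<^sub>R X \<in> exp_lie_algebra G"
  unfolding exp_lie_algebra_def by (simp only: mem_Collect_eq scaleR_scaleR) blast

lemma mexp_mem_if_exp_lie_algebra: "X \<in> exp_lie_algebra G \<Longrightarrow> mexp X \<in> G"
  unfolding exp_lie_algebra_def by (drule CollectD, drule spec[of _ 1]) simp

lemma mexp_prod_mem:
  assumes "matrix_group G" "set Ys \<subseteq> exp_lie_algebra G"
  shows "mexp_prod Ys \<in> G"
  using assms(2)
  by (induction Ys) (simp_all add: matrix_group_one[OF assms(1)] matrix_group_mult[OF assms(1)]
      mexp_mem_if_exp_lie_algebra)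

lemma mexp_of_nat_scaleR_mem:
  assumes "matrix_group G" "mexp A \<in> G"
  shows "mexp (of_nat k *\<^sub>R A) \<in> G"
proof (induction k)
  case 0
  then show ?case using matrix_group_one[OF assms(1)] by simp
next
  case (Suc k)
  then show ?case
    using mexp_add_scaleR[of "of_nat k" 1 A] matrix_group_mult[OF assms(1)] assms(2)
    by (simp add: add.commute)
qed

lemma mexp_of_int_scaleR_mem:
  assumes "matrix_group G" "mexp A \<in> G"
  shows "mexp (of_int m *\<^sub>R A) \<in> G"
proof (cases "m \<ge> 0")
  case True
  then show ?thesis
    using mexp_of_nat_scaleR_mem[OF assms, of "nat m"] by simp
next
  case False
  then have "mexp (of_int m *\<^sub>R A) = matrix_inv (mexp (of_nat (nat (- m)) *\<^sub>R A))"
    by (simp add: matrix_inv_mexp)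
  then show ?thesis
    using mexp_of_nat_scaleR_mem[OF assms] matrix_group_matrix_inv[OF assms(1)] by simp
qed

text \<open>Approximating \<open>t\<close> by integer multiples of \<open>norm (Z k)\<close> shows that \<open>mexp (t *\<^sub>R Y)\<close>
  is a limit of powers of \<open>mexp (Z k)\<close>.\<close>
lemma limit_direction_mem_exp_lie_algebra:
  assumes G: "matrix_group G" "closed G"
    and Z: "Z \<longlonglongrightarrow> 0" "\<And>k. Z k \<noteq> 0" "\<And>k. mexp (Z k) \<in> G"
    and Y: "(\<lambda>k. Z k /\<^sub>R norm (Z k)) \<longlonglongrightarrow> Y"
  shows "Y \<in> exp_lie_algebra G"
  unfolding exp_lie_algebra_def
proof (intro CollectI allI)
  fix t :: real
  define m where "m k = \<lfloor>t / norm (Z k)\<rfloor>" for k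
  have norm_pos: "norm (Z k) > 0" for k using Z(2) by simp
  have "\<bar>of_int (m k) * norm (Z k) - t\<bar> \<le> norm (Z k)" for k
  proof -
    have "of_int (m k) \<le> t / norm (Z k)" "t / norm (Z k) < of_int (m k) + 1"
      by (simp_all add: m_def)
    then show ?thesis
      using norm_pos[of k] by (simp add: le_divide_eq divide_less_eq algebra_simps abs_if)
  qed
  then have "(\<lambda>k. of_int (m k) * norm (Z k) - t) \<longlonglongrightarrow> 0"
    by (intro Lim_null_comparison[OF _ tendsto_norm_zero[OF Z(1)]]) simp
  then have "(\<lambda>k. (of_int (m k) * norm (Z k)) *\<^sub>R (Z k /\<^sub>R norm (Z k))) \<longlonglongrightarrow> t *\<^sub>R Y"
    by (intro tendsto_scaleR Y) (simp add: LIM_zero_iff)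
  moreover have "(\<lambda>k. (of_int (m k) * norm (Z k)) *\<^sub>R (Z k /\<^sub>R norm (Z k))) = (\<lambda>k. of_int (m k) *\<^sub>R Z k)"
    by (intro ext) (use norm_pos in simp)
  ultimately have "(\<lambda>k. of_int (m k) *\<^sub>R Z k) \<longlonglongrightarrow> t *\<^sub>R Y"
    by (simp only:)
  then have "(\<lambda>k. mexp (of_int (m k) *\<^sub>R Z k)) \<longlonglongrightarrow> mexp (t *\<^sub>R Y)"
    using continuous_on_tendsto_compose[OF continuous_on_mexp[of UNIV]] by auto
  from closed_sequentially[OF G(2) _ this] show "mexp (t *\<^sub>R Y) \<in> G"
    using mexp_of_int_scaleR_mem[OF G(1) Z(3)] by blast
qed

lemma exp_lie_algebra_complement_gap:
  assumes G: "matrix_group G" "closed G"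
    and S: "subspace S" "S \<inter> exp_lie_algebra G \<subseteq> {0}"
  shows "\<exists>r>0. \<forall>Z\<in>S. norm Z < r \<longrightarrow> mexp Z \<in> G \<longrightarrow> Z = 0"
proof (rule ccontr)
  assume "\<not> ?thesis"
  then have "\<forall>r>0. \<exists>Z\<in>S. norm Z < r \<and> mexp Z \<in> G \<and> Z \<noteq> 0"
    by blast
  then have "\<forall>k::nat. \<exists>Z\<in>S. norm Z < inverse (real k + 1) \<and> mexp Z \<in> G \<and> Z \<noteq> 0"
    by (simp add: add_pos_nonneg)
  then obtain Z where Z: "\<And>k. Z k \<in> S" "\<And>k. norm (Z k) < inverse (real k + 1)"
    "\<And>k. mexp (Z k) \<in> G" "\<And>k. Z k \<noteq> 0"
    by metis
  have Z0: "Z \<longlonglongrightarrow> 0"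
    by (rule tendsto_norm_zero_cancel, rule Lim_null_comparison[OF _ LIMSEQ_inverse_real_of_nat_add])
      (use less_imp_le[OF Z(2)] in \<open>simp add: add.commute\<close>)
  have "\<forall>k. Z k /\<^sub>R norm (Z k) \<in> sphere 0 1"
    using Z(4) by simp
  from seq_compactE[OF compact_imp_seq_compact[OF compact_sphere] this]
  obtain Y \<sigma> where Y: "Y \<in> sphere 0 1" "strict_mono \<sigma>"
    "((\<lambda>k. Z k /\<^sub>R norm (Z k)) \<circ> \<sigma>) \<longlonglongrightarrow> Y" .
  have "Y \<in> exp_lie_algebra G"
    using limit_direction_mem_exp_lie_algebra[OF G LIMSEQ_subseq_LIMSEQ[OF Z0 Y(2)]] Y(3) Z(3,4)
    by (simp add: o_def)
  moreover have "Y \<in> S"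
    using closed_sequentially[OF closed_subspace[OF S(1)] _ Y(3)] Z(1) subspace_scale[OF S(1)]
    by auto
  ultimately show False
    using S(2) Y(1) by auto
qed

lemma mat_one_interior_mexp_prod_chart:
  fixes bs :: "(real^'n^'n) list"
  assumes lin: "\<And>b. linear (c b)" "linear Q"
    and decomp: "\<And>X. (\<Sum>b\<leftarrow>bs. c b X *\<^sub>R b) + Q X = X"
    and "d > 0"
  shows "mat 1 \<in> interior ((\<lambda>X. mexp_prod (map (\<lambda>b. c b X *\<^sub>R b) bs @ [Q X])) ` ball 0 d)"
proof -
  define gs where "gs = map (\<lambda>b X. c b X *\<^sub>R b) bs @ [Q]"
  have chart: "(\<lambda>X. mexp_prod (map (\<lambda>b. c b X *\<^sub>R b) bs @ [Q X])) = (\<lambda>X. mexp_prod (map (\<lambda>g. g X) gs))"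
    by (simp add: gs_def o_def)
  have "linear (\<lambda>X. c b X *\<^sub>R b)" for b
    by (rule linearI) (simp_all add: linear_add[OF lin(1)] linear_scale[OF lin(1)] scaleR_add_left)
  then have bl: "\<forall>g\<in>set gs. bounded_linear g"
    using lin(2) by (auto simp: gs_def linear_conv_bounded_linear)
  have deriv: "((\<lambda>X. mexp_prod (map (\<lambda>g. g X) gs)) has_derivative id) (at 0)"
    using has_derivative_mexp_prod_at_0[OF bl] decomp by (simp add: gs_def o_def id_def)
  have cont: "continuous_on UNIV (\<lambda>X. mexp_prod (map (\<lambda>g. g X) gs))"
    using bl by (intro continuous_on_mexp_prod) (auto intro: linear_continuous_on)
  have "mexp_prod (map (\<lambda>g. g 0) gs) = mat 1"
    using bl by (induction gs) (simp_all add: linear_simps(3))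
  moreover have "mexp_prod (map (\<lambda>g. g 0) gs) \<in> interior ((\<lambda>X. mexp_prod (map (\<lambda>g. g X) gs)) ` ball 0 d)"
    by (rule sussmann_open_mapping[OF open_UNIV cont UNIV_I deriv bounded_linear_ident])
      (use \<open>d > 0\<close> in auto)
  ultimately show ?thesis
    unfolding chart by simp
qed

text \<open>Von Neumann's argument: split the matrix space as \<open>span B \<oplus> range Q\<close> with \<open>B\<close> a maximal
  independent subset of the Lie algebra. The chart \<open>X \<mapsto> \<Prod>\<^sub>b exp(c\<^sub>b(X) b) \<cdot> exp(Q X)\<close> is
  open at \<open>0\<close>, and the gap lemma forces \<open>Q X = 0\<close> whenever the chart lands in \<open>G\<close>.\<close>
lemma exp_lie_algebra_generates_near_one:
  assumes G: "matrix_group G" "closed G"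
  obtains U where "open U" "mat 1 \<in> U"
    "\<And>g. g \<in> G \<inter> U \<Longrightarrow> \<exists>Ys. set Ys \<subseteq> exp_lie_algebra G \<and> g = mexp_prod Ys"
proof -
  obtain B where B: "B \<subseteq> exp_lie_algebra G" "independent B" "exp_lie_algebra G \<subseteq> span B"
    by (rule maximal_independent_subset)
  obtain bs c Q where bs: "set bs = B" and lin: "\<And>b. linear (c b)" "linear Q"
    and decomp: "\<And>X. (\<Sum>b\<leftarrow>bs. c b X *\<^sub>R b) + Q X = X" and Q: "range Q \<inter> span B \<subseteq> {0}"
    using independent_complement_coordinates[OF B(2)] by blast
  obtain r where r: "r > 0" "\<And>Z. Z \<in> range Q \<Longrightarrow> norm Z < r \<Longrightarrow> mexp Z \<in> G \<Longrightarrow> Z = 0"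
    using exp_lie_algebra_complement_gap[OF G linear_subspace_image[OF lin(2) subspace_UNIV]] Q B(3)
    by blast
  obtain K where K: "K > 0" "\<And>X. norm (Q X) \<le> norm X * K"
    using bounded_linear.pos_bounded[OF lin(2)[unfolded linear_conv_bounded_linear]] by blast
  define chart where "chart X = mexp_prod (map (\<lambda>b. c b X *\<^sub>R b) bs @ [Q X])" for X
  show thesis
  proof (rule that[OF open_interior])
    show "mat 1 \<in> interior (chart ` ball 0 (r / K))"
      unfolding chart_def[abs_def] using mat_one_interior_mexp_prod_chart[OF lin decomp] r K by simp
    fix g assume "g \<in> G \<inter> interior (chart ` ball 0 (r / K))"
    then obtain X where X: "g \<in> G" "g = chart X" "norm X < r / K"
      using interior_subset by fastforce
    define Ys where "Ys = map (\<lambda>b. c b X *\<^sub>R b) bs"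
    have Ys: "set Ys \<subseteq> exp_lie_algebra G"
      using bs B(1) exp_lie_algebra_scaleR by (auto simp: Ys_def)
    then have "invertible (mexp_prod Ys)"
      using mexp_prod_mem[OF G(1)] matrix_group_invertible[OF G(1)] by blast
    moreover have g: "g = mexp_prod Ys ** mexp (Q X)"
      by (simp add: X(2) chart_def Ys_def mexp_prod_append)
    ultimately have "mexp (Q X) = matrix_inv (mexp_prod Ys) ** g"
      by (simp add: matrix_mul_assoc matrix_inv_mult_self)
    then have "mexp (Q X) \<in> G"
      using Ys X(1) G(1) mexp_prod_mem matrix_group_mult matrix_group_matrix_inv by metis
    moreover have "norm (Q X) < r"
      using K X(3) by (metis le_less_trans mult.commute pos_less_divide_eq)
    ultimately have "Q X = 0"
      using r(2) by blast
    then show "\<exists>Ys. set Ys \<subseteq> exp_lie_algebra G \<and> g = mexp_prod Ys"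
      using Ys g by auto
  qed
qed

lemma matrix_group_translate_nbhd:
  assumes G: "matrix_group G" and U: "open U" "mat 1 \<in> U" and g: "g \<in> G"
  obtains T where "openin (top_of_set G) T" "g \<in> T" "\<And>y. y \<in> T \<Longrightarrow> matrix_inv g ** y \<in> G \<inter> U"
proof
  let ?T = "G \<inter> (\<lambda>y. matrix_inv g ** y) -` U"
  show "openin (top_of_set G) ?T"
    using bounded_bilinear.bounded_linear_right[OF bounded_bilinear_matrix_mult]
    by (intro openin_open_Int continuous_open_vimage[OF U(1)] linear_continuous_at)
  show "g \<in> ?T"
    using g U(2) matrix_inv_mult_self(2)[OF matrix_group_invertible[OF G g]] by simp
  show "matrix_inv g ** y \<in> G \<inter> U" if "y \<in> ?T" for y
    using that g matrix_group_mult[OF G matrix_group_matrix_inv[OF G]] by blast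
qed

text \<open>A subgroup containing a neighbourhood of \<open>1\<close> is open, and closed because its complement
  is a union of open cosets.\<close>
lemma clopen_matrix_subgroup:
  fixes G :: "(real^'n^'n) set"
  assumes G: "matrix_group G"
    and H: "H \<subseteq> G" "\<And>A B. A \<in> H \<Longrightarrow> B \<in> H \<Longrightarrow> A ** B \<in> H" "\<And>A. A \<in> H \<Longrightarrow> matrix_inv A \<in> H"
    and U: "open U" "mat 1 \<in> U" "G \<inter> U \<subseteq> H"
  shows "openin (top_of_set G) H" "closedin (top_of_set G) H"
proof -
  have invertible: "invertible A" if "A \<in> H" for A
    using that H(1) matrix_group_invertible[OF G] by blast
  show "openin (top_of_set G) H"
    unfolding openin_subopen[of _ H]
  proof
    fix h assume h: "h \<in> H"
    then obtain T where T: "openin (top_of_set G) T" "h \<in> T" "\<And>y. y \<in> T \<Longrightarrow> matrix_inv h ** y \<in> G \<inter> U"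
      using matrix_group_translate_nbhd[OF G U(1,2)] H(1) by blast
    have "T \<subseteq> H"
      using H(2)[OF h] T(3) U(3) matrix_inv_cancel_left[OF invertible[OF h]] by (metis subsetI subsetD)
    then show "\<exists>T. openin (top_of_set G) T \<and> h \<in> T \<and> T \<subseteq> H"
      using T(1,2) by blast
  qed
  have "openin (top_of_set G) (G - H)"
    unfolding openin_subopen[of _ "G - H"]
  proof
    fix g assume g: "g \<in> G - H"
    then obtain T where T: "openin (top_of_set G) T" "g \<in> T" "\<And>y. y \<in> T \<Longrightarrow> matrix_inv g ** y \<in> G \<inter> U"
      using matrix_group_translate_nbhd[OF G U(1,2)] by blast
    have "y \<notin> H" if "y \<in> T" for y
    proof
      assume "y \<in> H"
      define h where "h = matrix_inv g ** y"
      have "h \<in> H" using T(3)[OF that] U(3) by (auto simp: h_def)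
      have "y ** matrix_inv h = g ** (h ** matrix_inv h)"
        using matrix_inv_cancel_left[OF matrix_group_invertible[OF G, of g]] g
        by (simp add: h_def matrix_mul_assoc)
      also have "\<dots> = g"
        using matrix_inv_mult_self(1)[OF invertible[OF \<open>h \<in> H\<close>]] by simp
      finally have "g \<in> H"
        using H(2)[OF \<open>y \<in> H\<close> H(3)[OF \<open>h \<in> H\<close>]] by simp
      with g show False by simp
    qed
    then show "\<exists>T. openin (top_of_set G) T \<and> g \<in> T \<and> T \<subseteq> G - H"
      using T(1,2) openin_subset[OF T(1)] by auto
  qed
  then show "closedin (top_of_set G) H"
    using H(1) by (simp add: closedin_def double_diff)
qed

lemma connected_matrix_group_eq_subgroup:
  fixes G :: "(real^'n^'n) set"
  assumes G: "matrix_group G" "closed G" "connected G"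
    and H: "H \<subseteq> G" "mat 1 \<in> H" "\<And>A B. A \<in> H \<Longrightarrow> B \<in> H \<Longrightarrow> A ** B \<in> H"
      "\<And>A. A \<in> H \<Longrightarrow> matrix_inv A \<in> H"
    and gen: "\<And>X. X \<in> exp_lie_algebra G \<Longrightarrow> mexp X \<in> H"
  shows "H = G"
proof -
  obtain U where U: "open U" "mat 1 \<in> U"
    "\<And>g. g \<in> G \<inter> U \<Longrightarrow> \<exists>Ys. set Ys \<subseteq> exp_lie_algebra G \<and> g = mexp_prod Ys"
    using exp_lie_algebra_generates_near_one[OF G(1,2)] by blast
  have "mexp_prod Ys \<in> H" if "set Ys \<subseteq> exp_lie_algebra G" for Ys
    using that by (induction Ys) (auto intro: H(2,3) gen)
  then have "G \<inter> U \<subseteq> H"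
    using U(3) by blast
  from clopen_matrix_subgroup[OF G(1) H(1,3,4) U(1,2) this] show ?thesis
    using G(3) H(2) unfolding connected_clopen by blast
qed

section \<open>Continuous one-parameter groups of linear maps are differentiable\<close>

lemma has_vector_derivative_at_0_iff:
  fixes f :: "real \<Rightarrow> 'a::real_normed_vector"
  shows "(f has_vector_derivative f') (at 0) \<longleftrightarrow> ((\<lambda>t. (f t - f 0) /\<^sub>R t) \<longlongrightarrow> f') (at 0)"
proof -
  have "\<forall>\<^sub>F t in at (0::real). norm ((f t - f 0 - (t - 0) *\<^sub>R f') /\<^sub>R norm (t - 0)) = norm ((f t - f 0) /\<^sub>R t - f')"
    unfolding eventually_at_filter
  proof (intro always_eventually allI impI)
    fix t :: real assume "t \<noteq> 0"
    then have "(f t - f 0) /\<^sub>R t - f' = (1 / t) *\<^sub>R (f t - f 0 - t *\<^sub>R f')"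
      by (simp add: scaleR_diff_right inverse_eq_divide)
    then show "norm ((f t - f 0 - (t - 0) *\<^sub>R f') /\<^sub>R norm (t - 0)) = norm ((f t - f 0) /\<^sub>R t - f')"
      by (simp add: divide_inverse_commute)
  qed
  then have "((\<lambda>t. norm ((f t - f 0 - (t - 0) *\<^sub>R f') /\<^sub>R norm (t - 0))) \<longlongrightarrow> 0) (at 0)
      \<longleftrightarrow> ((\<lambda>t. norm ((f t - f 0) /\<^sub>R t - f')) \<longlongrightarrow> 0) (at 0)"
    by (rule tendsto_cong)
  then show ?thesis
    unfolding has_vector_derivative_def has_derivative_at_within tendsto_norm_zero_iff LIM_zero_iff
    by (simp add: bounded_linear_scaleR_left)
qed

lemma has_vector_derivative_integral_sliding:
  fixes f :: "real \<Rightarrow> 'a::banach"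
  assumes f: "continuous_on UNIV f" and "e \<ge> 0"
  shows "((\<lambda>t. integral {t..t + e} f) has_vector_derivative f (t0 + e) - f t0) (at t0)"
proof -
  define F where "F x = integral {t0 - 1..x} f" for x
  have F': "(F has_vector_derivative f x) (at x)" if "x \<in> {t0 - 1 <..< t0 + e + 1}" for x
  proof -
    have "(F has_vector_derivative f x) (at x within {t0 - 1..t0 + e + 1})"
      unfolding F_def using that
      by (intro integral_has_vector_derivative continuous_on_subset[OF f]) auto
    moreover have "x \<in> interior {t0 - 1..t0 + e + 1}" using that by simp
    ultimately show ?thesis by (metis at_within_interior)
  qed
  have "((\<lambda>t. F (t + e)) has_vector_derivative f (t0 + e)) (at t0)"
    using vector_diff_chain_at[OF has_vector_derivative_add_const[THEN iffD2, OF has_vector_derivative_id] F']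
      \<open>e \<ge> 0\<close> by (simp add: o_def)
  from has_vector_derivative_diff[OF this F'] \<open>e \<ge> 0\<close>
  have D: "((\<lambda>t. F (t + e) - F t) has_vector_derivative f (t0 + e) - f t0) (at t0)"
    by simp
  have eq: "F (t + e) - F t = integral {t..t + e} f" if "t \<in> ball t0 1" for t
    using Henstock_Kurzweil_Integration.integral_combine[where a="t0 - 1" and c=t and b="t + e" and f=f] that \<open>e \<ge> 0\<close>
      integrable_continuous_real[OF continuous_on_subset[OF f]]
    by (auto simp: F_def dist_real_def algebra_simps)
  show ?thesis
    using has_vector_derivative_transform_within_open[OF D open_ball _ eq, of t0 1] by simp
qed

lemma one_parameter_group_near_id:
  fixes \<phi> :: "real \<Rightarrow> 'v::euclidean_space \<Rightarrow> 'v"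
  assumes lin: "\<And>t. linear (\<phi> t)" and "\<phi> 0 = id"
    and cont: "\<And>w. continuous_on UNIV (\<lambda>t. \<phi> t w)"
  obtains d where "d > 0" "\<And>s w. \<bar>s\<bar> < d \<Longrightarrow> norm (\<phi> s w - w) \<le> norm w / 2"
proof -
  define h where "h s = (\<Sum>b\<in>Basis. norm (\<phi> s b - b))" for s
  have "isCont h 0"
    unfolding h_def using cont continuous_on_eq_continuous_at
    by (intro continuous_intros) blast
  moreover have "h 0 = 0" by (simp add: h_def \<open>\<phi> 0 = id\<close>)
  ultimately obtain d where d: "d > 0" "\<And>s. \<bar>s\<bar> < d \<Longrightarrow> h s < 1/2"
    unfolding continuous_at_eps_delta dist_real_def
    by (metis diff_zero divide_pos_pos zero_less_numeral zero_less_one abs_less_iff)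
  have bound: "norm (\<phi> s w - w) \<le> norm w * h s" for s w
  proof -
    have "\<phi> s w = \<phi> s (\<Sum>b\<in>Basis. (w \<bullet> b) *\<^sub>R b)"
      by (simp add: euclidean_representation)
    also have "\<dots> = (\<Sum>b\<in>Basis. (w \<bullet> b) *\<^sub>R \<phi> s b)"
      by (simp add: linear_sum[OF lin] linear_scale[OF lin])
    finally have "\<phi> s w - w = (\<Sum>b\<in>Basis. (w \<bullet> b) *\<^sub>R (\<phi> s b - b))"
      by (simp add: scaleR_diff_right sum_subtractf euclidean_representation)
    also have "norm \<dots> \<le> (\<Sum>b\<in>Basis. norm w * norm (\<phi> s b - b))"
      by (intro norm_sum[THEN order_trans] sum_mono) (simp add: Basis_le_norm mult_right_mono)
    finally show ?thesis by (simp add: h_def sum_distrib_left)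
  qed
  have "norm (\<phi> s w - w) \<le> norm w / 2" if "\<bar>s\<bar> < d" for s w
    using bound[of s w] mult_left_mono[OF less_imp_le[OF d(2)[OF that]] norm_ge_zero[of w]] by simp
  with d(1) show thesis by (rule that)
qed

lemma integral_near_id_inj:
  fixes \<phi> :: "real \<Rightarrow> 'v::euclidean_space \<Rightarrow> 'v"
  assumes lin: "\<And>t. linear (\<phi> t)" and cont: "\<And>w. continuous_on UNIV (\<lambda>t. \<phi> t w)"
    and "e > 0" and near: "\<And>s w. s \<in> {0..e} \<Longrightarrow> norm (\<phi> s w - w) \<le> norm w / 2"
  shows "linear (\<lambda>w. integral {0..e} (\<lambda>s. \<phi> s w))" "inj (\<lambda>w. integral {0..e} (\<lambda>s. \<phi> s w))"
proof -
  have int: "(\<lambda>s. \<phi> s w) integrable_on {0..e}" for w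
    by (rule integrable_continuous_interval[OF continuous_on_subset[OF cont subset_UNIV]])
  show lin_A: "linear (\<lambda>w. integral {0..e} (\<lambda>s. \<phi> s w))"
    by (rule linearI) (simp_all add: linear_add[OF lin] linear_scale[OF lin] integral_add int)
  show "inj (\<lambda>w. integral {0..e} (\<lambda>s. \<phi> s w))"
  proof (rule linear_injective_0[OF lin_A, THEN iffD2], intro allI impI)
    fix w assume "integral {0..e} (\<lambda>s. \<phi> s w) = 0"
    then have "((\<lambda>s. \<phi> s w - w) has_integral - e *\<^sub>R w) (cbox 0 e)"
      using has_integral_diff[OF integrable_integral[OF int[of w]] has_integral_const_real[of w 0 e]] \<open>e > 0\<close>
      by simp
    then have "norm (- e *\<^sub>R w) \<le> norm w / 2 * measure lborel (cbox 0 e)"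
    proof (rule has_integral_bound[rotated])
      show "0 \<le> norm w / 2" by simp
      show "norm (\<phi> s w - w) \<le> norm w / 2" if "s \<in> cbox 0 e" for s
        using near that by simp
    qed
    then have "e * norm w \<le> e * (norm w / 2)"
      using \<open>e > 0\<close> by (simp add: mult.commute)
    then show "w = 0"
      using \<open>e > 0\<close> by simp
  qed
qed

text \<open>Smoothing by averaging: \<open>\<phi> t\<close> applied to \<open>\<integral>\<^sub>0\<^sup>e \<phi> s w ds\<close> is
  \<open>\<integral>\<^sub>t\<^sup>t\<^sup>+\<^sup>e \<phi> s w ds\<close>, which is differentiable in \<open>t\<close>, and such averages exhaust
  the space.\<close>
lemma one_parameter_group_has_vector_derivative:
  fixes \<phi> :: "real \<Rightarrow> 'v::euclidean_space \<Rightarrow> 'v"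
  assumes lin: "\<And>t. linear (\<phi> t)" and "\<phi> 0 = id" and add: "\<And>s t. \<phi> (s + t) = \<phi> s \<circ> \<phi> t"
    and cont: "\<And>w. continuous_on UNIV (\<lambda>t. \<phi> t w)"
  obtains B where "linear B" "\<And>u. ((\<lambda>t. \<phi> t u) has_vector_derivative B u) (at 0)"
proof -
  obtain d where d: "d > 0" "\<And>s w. \<bar>s\<bar> < d \<Longrightarrow> norm (\<phi> s w - w) \<le> norm w / 2"
    using one_parameter_group_near_id[OF lin \<open>\<phi> 0 = id\<close> cont] by blast
  define e where "e = d / 2"
  define A where "A w = integral {0..e} (\<lambda>s. \<phi> s w)" for w
  have "e > 0" using d(1) by (simp add: e_def)
  have "linear A" "inj A"
    unfolding A_def[abs_def] using d by (intro integral_near_id_inj[OF lin cont \<open>e > 0\<close>]; simp add: e_def)+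
  then obtain g where g: "linear g" "A \<circ> g = id"
    using linear_surjective_right_inverse linear_inj_imp_surj by blast
  have "((\<lambda>t. \<phi> t u) has_vector_derivative \<phi> e (g u) - g u) (at 0)" for u
  proof -
    have "\<phi> t u = integral {t..t + e} (\<lambda>s. \<phi> s (g u))" for t
    proof -
      have int: "(\<lambda>s. \<phi> s (g u)) integrable_on {0..e}"
        by (rule integrable_continuous_interval[OF continuous_on_subset[OF cont subset_UNIV]])
      have "\<phi> t u = \<phi> t (A (g u))" using g(2) by (metis comp_apply id_apply)
      also have "\<dots> = integral {0..e} ((\<lambda>s. \<phi> s (g u)) \<circ> (+) t)"
        using integral_linear[OF int linear_conv_bounded_linear[THEN iffD1, OF lin]] add
        by (simp add: A_def o_def)
      finally show ?thesis by (simp add: integral_shift_Icc_real add.commute)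
    qed
    then show ?thesis
      using has_vector_derivative_integral_sliding[OF cont[of "g u"], of e 0] \<open>e > 0\<close> \<open>\<phi> 0 = id\<close>
      by simp
  qed
  moreover have "linear (\<lambda>u. \<phi> e (g u) - g u)"
    using linear_compose[OF g(1) lin] g(1) by (simp add: o_def linear_compose_sub)
  ultimately show thesis by (rule that[rotated])
qed

section \<open>Representations\<close>

lemma
  assumes "representation G \<pi>"
  shows representation_linear: "x \<in> G \<Longrightarrow> linear (\<pi> x)"
    and representation_one: "\<pi> (mat 1) = id"
    and representation_mult: "x \<in> G \<Longrightarrow> y \<in> G \<Longrightarrow> \<pi> (x ** y) = \<pi> x \<circ> \<pi> y"
    and representation_continuous_on: "continuous_on G (\<lambda>x. \<pi> x w)"
  using assms by (auto simp: representation_def)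

lemma representation_apply_eq_sum_Basis:
  assumes "representation G \<pi>" "x \<in> G"
  shows "\<pi> x y = (\<Sum>b\<in>Basis. (y \<bullet> b) *\<^sub>R \<pi> x b)"
proof -
  have "\<pi> x y = \<pi> x (\<Sum>b\<in>Basis. (y \<bullet> b) *\<^sub>R b)" by (simp add: euclidean_representation)
  also have "\<dots> = (\<Sum>b\<in>Basis. (y \<bullet> b) *\<^sub>R \<pi> x b)"
    using representation_linear[OF assms] by (simp add: linear_sum linear_scale)
  finally show ?thesis .
qed

lemma tendsto_representation_apply:
  fixes \<pi> :: "real^'n^'n \<Rightarrow> 'v::euclidean_space \<Rightarrow> 'v"
  assumes rep: "representation G \<pi>" and g: "(g \<longlongrightarrow> x) F" "x \<in> G" "\<forall>\<^sub>F i in F. g i \<in> G"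
    and y: "(y \<longlongrightarrow> y0) F"
  shows "((\<lambda>i. \<pi> (g i) (y i)) \<longlongrightarrow> \<pi> x y0) F"
proof -
  have "((\<lambda>i. \<pi> (g i) b) \<longlongrightarrow> \<pi> x b) F" for b
    by (rule continuous_on_tendsto_compose[OF representation_continuous_on[OF rep] g])
  then have "((\<lambda>i. \<Sum>b\<in>Basis. (y i \<bullet> b) *\<^sub>R \<pi> (g i) b) \<longlongrightarrow> (\<Sum>b\<in>Basis. (y0 \<bullet> b) *\<^sub>R \<pi> x b)) F"
    by (intro tendsto_sum tendsto_scaleR tendsto_inner y tendsto_const)
  then show ?thesis
    unfolding representation_apply_eq_sum_Basis[OF rep g(2), symmetric]
    by (rule Lim_transform_eventually)
      (use g(3) in \<open>auto elim!: eventually_mono simp: representation_apply_eq_sum_Basis[OF rep]\<close>)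
qed

lemma has_vector_derivative_representation_apply:
  assumes rep: "representation G \<pi>" and g: "(g \<longlongrightarrow> x) (at 0)" "x \<in> G" "\<And>t. g t \<in> G"
    and u: "u 0 = 0" "(u has_vector_derivative d) (at 0)"
  shows "((\<lambda>t. \<pi> (g t) (u t)) has_vector_derivative \<pi> x d) (at 0)"
proof -
  have "((\<lambda>t. \<pi> (g t) ((u t - u 0) /\<^sub>R t)) \<longlongrightarrow> \<pi> x d) (at 0)"
    using u(2) g(3) by (intro tendsto_representation_apply[OF rep g(1,2)])
      (auto simp: has_vector_derivative_at_0_iff)
  moreover have "\<pi> (g t) ((u t - u 0) /\<^sub>R t) = (\<pi> (g t) (u t) - \<pi> (g 0) (u 0)) /\<^sub>R t" for t
    using representation_linear[OF rep g(3)] u(1) by (simp add: linear_scale linear_0)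
  ultimately show ?thesis
    by (simp add: has_vector_derivative_at_0_iff)
qed

definition rep_differential :: "(real^'n^'n \<Rightarrow> 'v::euclidean_space \<Rightarrow> 'v) \<Rightarrow> real^'n^'n \<Rightarrow> 'v \<Rightarrow> 'v" where
  "rep_differential \<pi> X u = vector_derivative (\<lambda>t. \<pi> (mexp (t *\<^sub>R X)) u) (at 0)"

lemma
  fixes \<pi> :: "real^'n^'n \<Rightarrow> 'v::euclidean_space \<Rightarrow> 'v"
  assumes rep: "representation G \<pi>" and X: "X \<in> exp_lie_algebra G"
  shows linear_rep_differential: "linear (rep_differential \<pi> X)"
    and has_vector_derivative_rep_differential:
      "((\<lambda>t. \<pi> (mexp (t *\<^sub>R X)) u) has_vector_derivative rep_differential \<pi> X u) (at 0)"
proof -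
  have G: "mexp (t *\<^sub>R X) \<in> G" for t using X by (simp add: exp_lie_algebra_def)
  have cont: "continuous_on UNIV (\<lambda>t. \<pi> (mexp (t *\<^sub>R X)) w)" for w
    using G by (intro continuous_on_compose2[OF representation_continuous_on[OF rep]]
        continuous_on_compose2[OF continuous_on_mexp] continuous_intros) auto
  have "\<pi> (mexp ((s + t) *\<^sub>R X)) = \<pi> (mexp (s *\<^sub>R X)) \<circ> \<pi> (mexp (t *\<^sub>R X))" for s t
    by (simp add: mexp_add_scaleR representation_mult[OF rep G G])
  moreover have "\<pi> (mexp (0 *\<^sub>R X)) = id"
    using representation_one[OF rep] by simp
  ultimately obtain B where B: "linear B"
    "\<And>u. ((\<lambda>t. \<pi> (mexp (t *\<^sub>R X)) u) has_vector_derivative B u) (at 0)"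
    using one_parameter_group_has_vector_derivative[of "\<lambda>t. \<pi> (mexp (t *\<^sub>R X))"]
      representation_linear[OF rep G] cont
    by blast
  have "rep_differential \<pi> X = B"
    using B(2) by (auto simp: rep_differential_def fun_eq_iff intro: vector_derivative_at)
  with B show "linear (rep_differential \<pi> X)"
    "((\<lambda>t. \<pi> (mexp (t *\<^sub>R X)) u) has_vector_derivative rep_differential \<pi> X u) (at 0)"
    by simp_all
qed

lemma zero_mem_diff_image: "x \<in> G \<Longrightarrow> 0 \<in> diff_image G f x"
  unfolding diff_image_def by (intro CollectI exI[of _ "\<lambda>t. x"] exI[of _ 0]) auto

lemma diff_image_scaleR:
  assumes "w \<in> diff_image G f x"
  shows "c *\<^sub>R w \<in> diff_image G f x"
proof -
  obtain \<gamma> X where \<gamma>: "\<forall>t. \<gamma> t \<in> G" "\<gamma> 0 = x" "(\<gamma> has_vector_derivative X) (at 0)"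
    "((\<lambda>t. f (\<gamma> t)) has_vector_derivative w) (at 0)"
    using assms unfolding diff_image_def by blast
  have c: "((*) c has_vector_derivative c) (at 0)"
    using has_vector_derivative_mult_right[OF has_vector_derivative_id, of c] by simp
  have "((\<lambda>t. \<gamma> (c * t)) has_vector_derivative c *\<^sub>R X) (at 0)"
    using vector_diff_chain_at[OF c, of \<gamma>] \<gamma>(3) by (simp add: o_def)
  moreover have "((\<lambda>t. f (\<gamma> (c * t))) has_vector_derivative c *\<^sub>R w) (at 0)"
    using vector_diff_chain_at[OF c, of "\<lambda>t. f (\<gamma> t)"] \<gamma>(4) by (simp add: o_def)
  ultimately show ?thesis
    unfolding diff_image_def using \<gamma>(1,2) by (intro CollectI exI[of _ "\<lambda>t. \<gamma> (c * t)"]) auto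
qed

lemma has_vector_derivative_representation_curve_product:
  fixes \<pi> :: "real^'n^'n \<Rightarrow> 'v::euclidean_space \<Rightarrow> 'v"
  assumes G: "matrix_group G" and rep: "representation G \<pi>" and x: "x \<in> G"
    and \<gamma>1: "\<And>t. \<gamma>1 t \<in> G" "(\<gamma>1 \<longlongrightarrow> x) (at 0)" "((\<lambda>t. \<pi> (\<gamma>1 t) v) has_vector_derivative w1) (at 0)"
    and \<gamma>2: "\<And>t. \<gamma>2 t \<in> G" "\<gamma>2 0 = x" "((\<lambda>t. \<pi> (\<gamma>2 t) v) has_vector_derivative w2) (at 0)"
  shows "((\<lambda>t. \<pi> (\<gamma>1 t ** matrix_inv x ** \<gamma>2 t) v) has_vector_derivative w1 + w2) (at 0)"
proof -
  define y where "y = matrix_inv x"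
  have y: "y \<in> G" "x ** y = mat 1" "y ** x = mat 1"
    using matrix_group_matrix_inv[OF G x] matrix_inv_mult_self[OF matrix_group_invertible[OF G x]]
    by (simp_all add: y_def)
  have \<pi>_xy: "\<pi> x (\<pi> y w) = w" "\<pi> y (\<pi> x w) = w" for w
    using fun_cong[OF representation_mult[OF rep x y(1)], of w] fun_cong[OF representation_mult[OF rep y(1) x], of w]
    by (simp_all add: y(2,3) representation_one[OF rep])
  define u where "u t = \<pi> y (\<pi> (\<gamma>2 t) v) - v" for t
  have "((\<lambda>t. \<pi> y (\<pi> (\<gamma>2 t) v)) has_vector_derivative \<pi> y w2) (at 0)"
    using representation_linear[OF rep y(1)]
    by (intro bounded_linear.has_vector_derivative[OF _ \<gamma>2(3)]) (simp add: linear_conv_bounded_linear)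
  then have du: "(u has_vector_derivative \<pi> y w2) (at 0)"
    using has_vector_derivative_diff[OF _ has_vector_derivative_const[of v]] by (simp add: u_def[abs_def])
  have "u 0 = 0"
    using \<pi>_xy by (simp add: u_def \<gamma>2(2))
  from has_vector_derivative_representation_apply[OF rep \<gamma>1(2) x \<gamma>1(1) this du]
  have "((\<lambda>t. \<pi> (\<gamma>1 t) (u t)) has_vector_derivative w2) (at 0)"
    by (simp add: \<pi>_xy)
  moreover have "\<pi> (\<gamma>1 t ** y ** \<gamma>2 t) v = \<pi> (\<gamma>1 t) v + \<pi> (\<gamma>1 t) (u t)" for t
    using representation_mult[OF rep] representation_linear[OF rep \<gamma>1(1)] matrix_group_mult[OF G]
      \<gamma>1(1) \<gamma>2(1) y(1)
    by (simp add: u_def linear_diff)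
  ultimately show ?thesis
    using has_vector_derivative_add[OF \<gamma>1(3)] by (simp add: y_def)
qed

text \<open>Given curves \<open>\<gamma>\<^sub>1, \<gamma>\<^sub>2\<close> through \<open>x\<close>, the curve \<open>\<gamma>\<^sub>1 x\<inverse> \<gamma>\<^sub>2\<close> realises the sum
  of their velocities.\<close>
lemma diff_image_add:
  fixes \<pi> :: "real^'n^'n \<Rightarrow> 'v::euclidean_space \<Rightarrow> 'v"
  assumes G: "matrix_group G" and rep: "representation G \<pi>" and x: "x \<in> G"
    and w1: "w1 \<in> diff_image G (\<lambda>g. \<pi> g v) x" and w2: "w2 \<in> diff_image G (\<lambda>g. \<pi> g v) x"
  shows "w1 + w2 \<in> diff_image G (\<lambda>g. \<pi> g v) x"
proof -
  obtain \<gamma>1 X1 where \<gamma>1: "\<And>t. \<gamma>1 t \<in> G" "\<gamma>1 0 = x" "(\<gamma>1 has_vector_derivative X1) (at 0)"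
    "((\<lambda>t. \<pi> (\<gamma>1 t) v) has_vector_derivative w1) (at 0)"
    using w1 unfolding diff_image_def by blast
  obtain \<gamma>2 X2 where \<gamma>2: "\<And>t. \<gamma>2 t \<in> G" "\<gamma>2 0 = x" "(\<gamma>2 has_vector_derivative X2) (at 0)"
    "((\<lambda>t. \<pi> (\<gamma>2 t) v) has_vector_derivative w2) (at 0)"
    using w2 unfolding diff_image_def by blast
  let ?y = "matrix_inv x"
  have "(\<gamma>1 \<longlongrightarrow> x) (at 0)"
    using has_vector_derivative_continuous[OF \<gamma>1(3)] \<gamma>1(2) by (simp add: continuous_at)
  with has_vector_derivative_representation_curve_product[OF G rep x \<gamma>1(1) _ \<gamma>1(4) \<gamma>2(1,2,4)]
  have "((\<lambda>t. \<pi> (\<gamma>1 t ** ?y ** \<gamma>2 t) v) has_vector_derivative w1 + w2) (at 0)" .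
  moreover have "((\<lambda>t. \<gamma>1 t ** ?y ** \<gamma>2 t) has_vector_derivative \<gamma>1 0 ** ?y ** X2 + X1 ** ?y ** \<gamma>2 0) (at 0)"
    by (intro bounded_bilinear.has_vector_derivative[OF bounded_bilinear_matrix_mult]
        bounded_linear.has_vector_derivative[OF bounded_bilinear.bounded_linear_left[OF bounded_bilinear_matrix_mult]]
        \<gamma>1(3) \<gamma>2(3))
  moreover have "\<gamma>1 t ** ?y ** \<gamma>2 t \<in> G" for t
    using matrix_group_mult[OF G] matrix_group_matrix_inv[OF G x] \<gamma>1(1) \<gamma>2(1) by blast
  moreover have "\<gamma>1 0 ** ?y ** \<gamma>2 0 = x"
    using matrix_inv_cancel_left[OF matrix_group_invertible[OF G x]]
    by (simp add: \<gamma>1(2) \<gamma>2(2) matrix_mul_assoc[symmetric])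
  ultimately show ?thesis
    unfolding diff_image_def by (intro CollectI exI[of _ "\<lambda>t. \<gamma>1 t ** ?y ** \<gamma>2 t"]) blast
qed

lemma subspace_diff_image:
  fixes \<pi> :: "real^'n^'n \<Rightarrow> 'v::euclidean_space \<Rightarrow> 'v"
  assumes "matrix_group G" "representation G \<pi>" "x \<in> G"
  shows "subspace (diff_image G (\<lambda>g. \<pi> g v) x)"
  unfolding subspace_def
  using zero_mem_diff_image[OF assms(3)] diff_image_add[OF assms] diff_image_scaleR by blast

lemma rep_differential_mem_diff_image:
  fixes \<pi> :: "real^'n^'n \<Rightarrow> 'v::euclidean_space \<Rightarrow> 'v"
  assumes G: "matrix_group G" and rep: "representation G \<pi>"
    and X: "X \<in> exp_lie_algebra G" and x: "x \<in> G"
  shows "rep_differential \<pi> X (\<pi> x v) \<in> diff_image G (\<lambda>g. \<pi> g v) x"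
proof -
  have XG: "mexp (t *\<^sub>R X) \<in> G" for t using X by (simp add: exp_lie_algebra_def)
  have "((\<lambda>t. mexp (t *\<^sub>R X) ** x) has_vector_derivative X ** x) (at 0)"
    by (rule bounded_linear.has_vector_derivative[OF
          bounded_bilinear.bounded_linear_left[OF bounded_bilinear_matrix_mult] mexp_scaleR_has_vector_derivative_0])
  moreover have "\<pi> (mexp (t *\<^sub>R X) ** x) v = \<pi> (mexp (t *\<^sub>R X)) (\<pi> x v)" for t
    by (simp add: representation_mult[OF rep XG x])
  moreover have "mexp (t *\<^sub>R X) ** x \<in> G" for t
    using matrix_group_mult[OF G XG x] .
  ultimately show ?thesis
    unfolding diff_image_def using has_vector_derivative_rep_differential[OF rep X, of "\<pi> x v"]
    by (intro CollectI exI[of _ "\<lambda>t. mexp (t *\<^sub>R X) ** x"]) auto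
qed

lemma invariant_along_exp_if_orthogonal_rep_differential:
  fixes \<pi> :: "real^'n^'n \<Rightarrow> 'v::euclidean_space \<Rightarrow> 'v"
  assumes rep: "representation G \<pi>" and X: "X \<in> exp_lie_algebra G"
    and orth: "\<And>w. a \<bullet> rep_differential \<pi> X w = 0"
  shows "a \<bullet> \<pi> (mexp X) w = a \<bullet> w"
proof -
  define h where "h t = a \<bullet> \<pi> (mexp (t *\<^sub>R X)) w" for t
  have XG: "mexp (t *\<^sub>R X) \<in> G" for t using X by (simp add: exp_lie_algebra_def)
  have "(h has_field_derivative 0) (at t)" for t
  proof -
    have "h (s + t) = a \<bullet> \<pi> (mexp (s *\<^sub>R X)) (\<pi> (mexp (t *\<^sub>R X)) w)" for s
      by (simp add: h_def mexp_add_scaleR representation_mult[OF rep XG XG])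
    moreover have "((\<lambda>s. a \<bullet> \<pi> (mexp (s *\<^sub>R X)) (\<pi> (mexp (t *\<^sub>R X)) w)) has_vector_derivative 0) (at 0)"
      using bounded_linear.has_vector_derivative[OF bounded_linear_inner_right[of a]
          has_vector_derivative_rep_differential[OF rep X, of "\<pi> (mexp (t *\<^sub>R X)) w"]]
      by (simp add: orth)
    ultimately have "((\<lambda>s. h (s + t)) has_field_derivative 0) (at 0)"
      by (simp add: has_real_derivative_iff_has_vector_derivative)
    then show ?thesis
      using DERIV_shift[of h 0 0 t] by simp
  qed
  then have "h 1 = h 0"
    by (intro DERIV_isconst_all) blast
  then show ?thesis
    by (simp add: h_def representation_one[OF rep])
qed

lemma invariant_if_orthogonal_rep_differential:
  fixes \<pi> :: "real^'n^'n \<Rightarrow> 'v::euclidean_space \<Rightarrow> 'v"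
  assumes G: "matrix_group G" "closed G" "connected G" and rep: "representation G \<pi>"
    and orth: "\<And>X w. X \<in> exp_lie_algebra G \<Longrightarrow> a \<bullet> rep_differential \<pi> X w = 0"
    and g: "g \<in> G"
  shows "a \<bullet> \<pi> g w = a \<bullet> w"
proof -
  define H where "H = {g \<in> G. \<forall>w. a \<bullet> \<pi> g w = a \<bullet> w}"
  have "H = G"
  proof (rule connected_matrix_group_eq_subgroup[OF G])
    show "H \<subseteq> G" "mat 1 \<in> H"
      using matrix_group_one[OF G(1)] by (auto simp: H_def representation_one[OF rep])
    show "A ** B \<in> H" if "A \<in> H" "B \<in> H" for A B
      using that matrix_group_mult[OF G(1)] by (auto simp: H_def representation_mult[OF rep])
    show "matrix_inv A \<in> H" if A: "A \<in> H" for A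
    proof -
      have AG: "A \<in> G" "matrix_inv A \<in> G"
        using A matrix_group_matrix_inv[OF G(1)] by (auto simp: H_def)
      have "a \<bullet> \<pi> (matrix_inv A) w = a \<bullet> w" for w
      proof -
        have "a \<bullet> \<pi> (matrix_inv A) w = a \<bullet> \<pi> A (\<pi> (matrix_inv A) w)"
          using A by (simp add: H_def)
        also have "\<pi> A (\<pi> (matrix_inv A) w) = w"
          using fun_cong[OF representation_mult[OF rep AG], of w] representation_one[OF rep]
            matrix_inv_mult_self(1)[OF matrix_group_invertible[OF G(1) AG(1)]] by simp
        finally show ?thesis .
      qed
      then show ?thesis
        using AG(2) by (simp add: H_def)
    qed
    show "mexp X \<in> H" if "X \<in> exp_lie_algebra G" for X
      using that invariant_along_exp_if_orthogonal_rep_differential[OF rep that orth]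
        mexp_mem_if_exp_lie_algebra by (auto simp: H_def)
  qed
  then show ?thesis
    using g by (auto simp: H_def)
qed

lemma irreducible_rep_trivial_if_invariant_functional:
  assumes irr: "irreducible_rep G \<pi>" and "a \<noteq> 0"
    and inv: "\<And>g w. g \<in> G \<Longrightarrow> a \<bullet> \<pi> g w = a \<bullet> w" and g: "g \<in> G"
  shows "\<pi> g w = w"
proof -
  have "\<pi> g ` {y. a \<bullet> y = 0} \<subseteq> {y. a \<bullet> y = 0}" if "g \<in> G" for g
    using inv[OF that] by auto
  moreover have "{y. a \<bullet> y = 0} \<noteq> UNIV"
    using \<open>a \<noteq> 0\<close> by (metis (mono_tags) UNIV_I inner_eq_zero_iff mem_Collect_eq)
  ultimately have "{y. a \<bullet> y = 0} = {0}"
    using irr subspace_hyperplane[of a] unfolding irreducible_rep_def by blast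
  moreover have "\<pi> g w - w \<in> {y. a \<bullet> y = 0}"
    using inv[OF g] by (simp add: inner_diff_right)
  ultimately show ?thesis by simp
qed

lemma rep_differential_orthogonal:
  fixes \<pi> :: "real^'n^'n \<Rightarrow> 'v::euclidean_space \<Rightarrow> 'v"
  assumes G: "matrix_group G" and rep: "representation G \<pi>" and x: "\<forall>i<n. x i \<in> G"
    and int: "0 \<in> interior (convex hull ((\<lambda>i. \<pi> (x i) v) ` {..<n}))"
    and orth: "\<And>i y. i < n \<Longrightarrow> y \<in> diff_image G (\<lambda>g. \<pi> g v) (x i) \<Longrightarrow> a \<bullet> y = 0"
    and X: "X \<in> exp_lie_algebra G"
  shows "a \<bullet> rep_differential \<pi> X w = 0"
proof -
  define c where "c = adjoint (rep_differential \<pi> X) a"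
  have c: "y \<bullet> c = a \<bullet> rep_differential \<pi> X y" for y
    using adjoint_works[OF linear_rep_differential[OF rep X], of y a] by (simp add: c_def inner_commute)
  have "c = 0"
  proof (rule orthogonal_zero_if_zero_interior_convex_hull[OF int])
    fix y assume "y \<in> (\<lambda>i. \<pi> (x i) v) ` {..<n}"
    then obtain i where i: "i < n" "y = \<pi> (x i) v" by blast
    then have "a \<bullet> rep_differential \<pi> X y = 0"
      using orth rep_differential_mem_diff_image[OF G rep X] x by blast
    then show "c \<bullet> y = 0"
      using c[of y] by (simp add: inner_commute)
  qed
  then show ?thesis
    using c[of w] by simp
qed

text \<open>Only closedness and connectedness of \<open>G\<close> enter the proof.\<close>
theorem corollary2p5:
  fixes G :: "(real^'n^'n) set" and \<pi> :: "real^'n^'n \<Rightarrow> 'v::euclidean_space \<Rightarrow> 'v"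
    and v :: 'v and x :: "nat \<Rightarrow> real^'n^'n" and n :: nat
  assumes "matrix_group G" and "compact G" and "connected G"
    and "simple_lie_algebra (lie_algebra G)"
    and "irreducible_rep G \<pi>"
    and "\<forall>i<n. x i \<in> G"
    and "0 \<in> interior (convex hull ((\<lambda>i. \<pi> (x i) v) ` {..<n}))"
  shows "(\<Sum>i<n. diff_image G (\<lambda>g. \<pi> g v) (x i)) = UNIV"
proof (rule ccontr)
  let ?W = "\<Sum>i<n. diff_image G (\<lambda>g. \<pi> g v) (x i)"
  note G = assms(1) compact_imp_closed[OF assms(2)] assms(3)
  have rep: "representation G \<pi>" using assms(5) by (simp add: irreducible_rep_def)
  have "subspace ?W"
    using subspace_set_sum[of "{..<n}" "\<lambda>i. diff_image G (\<lambda>g. \<pi> g v) (x i)"]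
      subspace_diff_image[OF G(1) rep] assms(6) by simp
  moreover assume "?W \<noteq> UNIV"
  ultimately obtain a where a: "a \<noteq> 0" "\<And>y. y \<in> ?W \<Longrightarrow> a \<bullet> y = 0"
    using proper_subspace_orthogonal_exists by blast
  have "diff_image G (\<lambda>g. \<pi> g v) (x i) \<subseteq> ?W" if "i < n" for i
    using subset_set_sum[of "{..<n}" i "\<lambda>i. diff_image G (\<lambda>g. \<pi> g v) (x i)"]
      that assms(6) zero_mem_diff_image by blast
  then have "a \<bullet> y = 0" if "i < n" "y \<in> diff_image G (\<lambda>g. \<pi> g v) (x i)" for i y
    using a(2) that by blast
  then have "a \<bullet> \<pi> g w = a \<bullet> w" if "g \<in> G" for g w
    using rep_differential_orthogonal[OF G(1) rep assms(6,7)]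
    by (intro invariant_if_orthogonal_rep_differential[OF G rep _ that]) blast
  then have "(\<lambda>i. \<pi> (x i) v) ` {..<n} \<subseteq> {v}"
    using irreducible_rep_trivial_if_invariant_functional[OF assms(5) a(1)] assms(6) by auto
  then have "convex hull ((\<lambda>i. \<pi> (x i) v) ` {..<n}) \<subseteq> {v}"
    by (rule hull_minimal) (rule convex_singleton)
  then show False
    using interior_mono[of _ "{v}"] assms(7) by auto
qed

end
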